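(* Let $0<\alpha<2$ and let $\theta_1\neq\theta_2$ be constants. No ellipse with unequal semi-axes is a rotating patch for the $\alpha$-patch equation. Precisely: let $R_1\neq R_2$ be positive numbers and let $D_0$ be the region bounded by the ellipse $z_0(x)=(R_1\cos x,R_2\sin x)$, $x\in[0,2\pi]$. Then there is no real $\Omega$ such that the rigidly rotated domains $D(t)=e^{i\Omega t}D_0$ (rotation about the center of mass, the origin) form a solution of the $\alpha$-patch evolution. Equivalently, there is no real $\Omega$ such that $$\Big\langle c_\alpha\int_0^{2\pi}\frac{\partial_x z_0(x)-\partial_x z_0(x-y)}{|z_0(x)-z_0(x-y)|^{\alpha}}\,dy,\ \partial_x z_0(x)^\perp\Big\rangle=\big\langle i\Omega z_0(x),\ \partial_x z_0(x)^\perp\big\rangle\quad\text{for all }x\in[0,2\pi],$$ where $iz$ denotes the rotation of $z$ by $\pi/2$.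
   Context: The $\alpha$-patch problem: $\theta(x,t)=\theta_1$ on a bounded simply connected domain $D(t)\subset\mathbb R^2$ and $\theta_2$ on its complement, transported by the velocity $v=\nabla^\perp(-\Delta)^{-(1-\alpha/2)}\theta$. Parametrizing the boundary $\partial D(t)$ by a $2\pi$-periodic curve $z(x,t)$, the evolution (up to tangential reparametrization, which does not change the domain) is $$\partial_t z(x,t)=c_\alpha\int_0^{2\pi}\frac{\partial_x z(x,t)-\partial_x z(x-y,t)}{|z(x,t)-z(x-y,t)|^{\alpha}}\,dy,\qquad c_\alpha=-\frac{(\theta_2-\theta_1)\Gamma(\alpha/2)}{\pi^2 2^{2-\alpha}\Gamma(\frac{2-\alpha}{2})}.$$ Only the normal component of the velocity determines the evolution of the domain. A rotating patch is a solution whose domain at time $t$ is the initial domain rotated by angle $\Omega t$ about its center of mass, for a constant angular velocity $\Omega$; $\partial_x z^\perp$ denotes the normal vector obtained by rotating $\partial_x z$ by $\pi/2$. *)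

theory Defs
  imports "HOL-Analysis.Analysis"
begin

text \<open>Points of the plane are represented as complex numbers; the Euclidean inner
product is the library's inner product on complex; rotation by pi/2 is
multiplication by the imaginary unit.\<close>

definition c_alpha :: "real \<Rightarrow> real \<Rightarrow> real \<Rightarrow> real" where
  "c_alpha \<alpha> \<theta>1 \<theta>2 =
     - ((\<theta>2 - \<theta>1) * Gamma (\<alpha> / 2)) /
       (pi\<^sup>2 * 2 powr (2 - \<alpha>) * Gamma ((2 - \<alpha>) / 2))"

definition perp :: "complex \<Rightarrow> complex" where
  "perp w = \<i> * w"

definition patch_velocity ::
  "real \<Rightarrow> real \<Rightarrow> real \<Rightarrow> (real \<Rightarrow> complex) \<Rightarrow> (real \<Rightarrow> complex) \<Rightarrow> real \<Rightarrow> complex" where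
  "patch_velocity \<alpha> \<theta>1 \<theta>2 z dz x =
     complex_of_real (c_alpha \<alpha> \<theta>1 \<theta>2) *
     integral {0..2*pi} (\<lambda>y. (dz x - dz (x - y)) / complex_of_real (cmod (z x - z (x - y)) powr \<alpha>))"

definition ellipse :: "real \<Rightarrow> real \<Rightarrow> real \<Rightarrow> complex" where
  "ellipse R1 R2 x = Complex (R1 * cos x) (R2 * sin x)"

definition ellipse_deriv :: "real \<Rightarrow> real \<Rightarrow> real \<Rightarrow> complex" where
  "ellipse_deriv R1 R2 x = Complex (- R1 * sin x) (R2 * cos x)"

end

theory Submission
  imports Defs
begin

text \<open>
  The chord of the ellipse between the parameters x - y and x is 2 sin(y/2) times the tangent
  vector at the midpoint x - y/2.  Hence the normal component of the patch velocity at x is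
  c R1 R2 times the integral over y in [0, 2 pi] of s(y) w(x - y/2), where s(y) =
  sin y / |2 sin(y/2)|^alpha is the kernel of the unit circle and w(u) = |z0'(u)|^(-alpha)
  has period pi.  For a rotating ellipse this normal velocity is a multiple of sin x cos x,
  so its moment against sin 4x over [0, pi] vanishes.  By Fubini and the substitution
  x = u + y/2, however, that moment is the product of the integral of w(u) cos 4u over
  [0, pi] and the integral of s(y) sin 2y over [0, 2 pi].  Both factors are positive when
  R1 \<noteq> R2: folding the intervals along the symmetries of the integrands turns each into the
  integral of a function that is nonnegative and strictly positive on a subinterval.
\<close>

lemma mult_cos_le_sin:
  assumes "0 \<le> t" "t \<le> pi/2"
  shows "t * cos t \<le> sin t"
proof -
  have "(\<lambda>t. sin t - t * cos t) 0 \<le> (\<lambda>t. sin t - t * cos t) t"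
  proof (rule DERIV_nonneg_imp_nondecreasing[OF assms(1)])
    fix x assume x: "0 \<le> x" "x \<le> t"
    show "\<exists>y. DERIV (\<lambda>t. sin t - t * cos t) x :> y \<and> 0 \<le> y"
    proof (intro exI conjI)
      show "DERIV (\<lambda>t. sin t - t * cos t) x :> x * sin x"
        by (auto intro!: derivative_eq_intros simp: algebra_simps)
      show "0 \<le> x * sin x"
        using x assms by (intro mult_nonneg_nonneg sin_ge_zero) auto
    qed
  qed
  then show ?thesis by simp
qed

lemma quarter_le_sin:
  assumes "0 \<le> t" "t \<le> pi/2"
  shows "t/4 \<le> sin t"
proof (cases "t \<le> pi/3")
  case True
  have "1/2 \<le> cos t"
    using cos_monotone_0_pi_le[of t "pi/3"] True assms by (simp add: cos_60)
  then have "t/2 \<le> t * cos t"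
    using assms mult_left_mono[of "1/2" "cos t" t] by simp
  with mult_cos_le_sin[OF assms] assms show ?thesis by linarith
next
  case False
  have "sqrt 3 / 2 \<le> sin t"
    using sin_monotone_2pi_le[of "pi/3" t] False assms by (simp add: sin_60)
  moreover have "1 \<le> sqrt 3" and "t/4 \<le> 1/2"
    using assms pi_less_4 by simp_all
  ultimately show ?thesis by linarith
qed

lemma powr_neg_symmetric_sum_strict_mono:
  fixes p q \<beta> s t :: real
  assumes "0 < \<beta>" "q \<noteq> 0" "\<bar>q\<bar> < p" "0 \<le> s" "s < t" "t \<le> 1"
  shows "(p + q * s) powr (-\<beta>) + (p - q * s) powr (-\<beta>) < (p + q * t) powr (-\<beta>) + (p - q * t) powr (-\<beta>)"
proof -
  have pos: "0 < p + q * r \<and> 0 < p - q * r" if "0 \<le> r" "r \<le> 1" for r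
  proof -
    have "\<bar>q * r\<bar> \<le> \<bar>q\<bar>" using that by (simp add: abs_mult mult_left_le)
    then show ?thesis using assms(3) by linarith
  qed
  let ?\<psi> = "\<lambda>r. (p + q * r) powr (-\<beta>) + (p - q * r) powr (-\<beta>)"
  show ?thesis
  proof (rule DERIV_pos_imp_increasing_open[of s t ?\<psi>, OF assms(5)])
    fix r assume r: "s < r" "r < t"
    then have b: "0 < p + q * r" "0 < p - q * r" "0 < r"
      using pos[of r] assms by auto
    let ?d = "\<beta> * q * ((p - q * r) powr (-\<beta> - 1) - (p + q * r) powr (-\<beta> - 1))"
    have "DERIV ?\<psi> r :> ?d"
      using b by (auto intro!: derivative_eq_intros DERIV_fun_powr[THEN DERIV_cong] simp: algebra_simps)
    moreover have "0 < ?d"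
    proof (cases "q > 0")
      case True
      then have "(p + q * r) powr (-\<beta> - 1) < (p - q * r) powr (-\<beta> - 1)"
        using b assms by (intro powr_less_mono2_neg) auto
      then show ?thesis using True assms by (simp add: mult_pos_pos)
    next
      case False
      then have "q < 0" using assms by simp
      moreover have "(p - q * r) powr (-\<beta> - 1) < (p + q * r) powr (-\<beta> - 1)"
        using b \<open>q < 0\<close> assms by (intro powr_less_mono2_neg) (auto simp: mult_neg_pos)
      ultimately show ?thesis using assms by (simp add: mult_pos_neg mult_neg_neg)
    qed
    ultimately show "\<exists>y. DERIV ?\<psi> r :> y \<and> 0 < y" by blast
  next
    have "\<forall>r\<in>{s..t}. 0 < p + q * r \<and> 0 < p - q * r"
      using pos assms by auto
    then show "continuous_on {s..t} ?\<psi>"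
      by (intro continuous_intros) auto
  qed
qed

lemma integral_sin4_sin2: "integral {0..pi} (\<lambda>x. sin (4 * x) * sin (2 * x)) = 0"
proof -
  let ?F = "\<lambda>x. sin (2 * x) / 4 - sin (6 * x) / 12"
  have "((\<lambda>x. sin (4 * x) * sin (2 * x)) has_integral (?F pi - ?F 0)) {0..pi}"
  proof (rule fundamental_theorem_of_calculus)
    fix x :: real
    have "cos (6 * x) = cos (4 * x) * cos (2 * x) - sin (4 * x) * sin (2 * x)"
      and "cos (2 * x) = cos (4 * x) * cos (2 * x) + sin (4 * x) * sin (2 * x)"
      using cos_add[of "4 * x" "2 * x"] cos_diff[of "4 * x" "2 * x"] by simp_all
    then have "sin (4 * x) * sin (2 * x) = cos (2 * x) / 2 - cos (6 * x) / 2"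
      by linarith
    moreover have "(?F has_real_derivative (cos (2 * x) / 2 - cos (6 * x) / 2)) (at x within {0..pi})"
      by (auto intro!: derivative_eq_intros)
    ultimately show "(?F has_vector_derivative (sin (4 * x) * sin (2 * x))) (at x within {0..pi})"
      by (simp add: has_real_derivative_iff_has_vector_derivative)
  qed simp
  moreover have "?F pi - ?F 0 = 0"
    by simp
  ultimately show ?thesis
    by (simp add: integral_unique)
qed


lemma has_integral_reflect_interval:
  fixes f :: "real \<Rightarrow> 'b::real_normed_vector"
  assumes "(f has_integral I) {a..b}"
  shows "((\<lambda>x. f (a + b - x)) has_integral I) {a..b}"
proof -
  have "((\<lambda>x. f (- x)) has_integral I) {-b..-a}"
    using assms by simp
  then have "((\<lambda>x. f (- (x + (- a - b)))) has_integral I) {-b - (- a - b)..-a - (- a - b)}"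
    by (rule has_integral_shift_real_ivl)
  then show ?thesis by (simp add: algebra_simps)
qed

lemma integrable_reflect_interval:
  fixes f :: "real \<Rightarrow> 'b::real_normed_vector"
  assumes "f integrable_on {a..b}"
  shows "(\<lambda>x. f (a + b - x)) integrable_on {a..b}"
  using has_integral_reflect_interval assms unfolding integrable_on_def by blast

lemma integral_reflect_interval:
  fixes f :: "real \<Rightarrow> 'b::real_normed_vector"
  assumes "f integrable_on {a..b}"
  shows "integral {a..b} (\<lambda>x. f (a + b - x)) = integral {a..b} f"
  using has_integral_reflect_interval[OF integrable_integral[OF assms]] by (rule integral_unique)

lemma integral_fold_midpoint:
  fixes f :: "real \<Rightarrow> 'b::banach"
  assumes f: "f integrable_on {a..b}" and "a \<le> b"
  shows "integral {a..b} f = integral {a..(a + b)/2} (\<lambda>u. f u + f (a + b - u))"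
proof -
  define m where "m = (a + b)/2"
  have m: "a \<le> m" "m \<le> b" "m - (b - m) = a" "b - (b - m) = m" "m + b - (u + (b - m)) = a + b - u" for u
    using \<open>a \<le> b\<close> by (auto simp: m_def field_simps)
  have fl: "f integrable_on {a..m}" and fr: "f integrable_on {m..b}"
    using integrable_subinterval_real[OF f] m by auto
  have "((\<lambda>u. f (m + b - u)) has_integral integral {m..b} f) {m..b}"
    by (rule has_integral_reflect_interval[OF integrable_integral[OF fr]])
  then have "((\<lambda>u. f (m + b - (u + (b - m)))) has_integral integral {m..b} f) {m - (b - m)..b - (b - m)}"
    by (rule has_integral_shift_real_ivl)
  then have "((\<lambda>u. f (a + b - u)) has_integral integral {m..b} f) {a..m}"
    by (simp only: m)
  from has_integral_add[OF integrable_integral[OF fl] this]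
  have "integral {a..m} (\<lambda>u. f u + f (a + b - u)) = integral {a..m} f + integral {m..b} f"
    by (rule integral_unique)
  also have "\<dots> = integral {a..b} f"
    using Henstock_Kurzweil_Integration.integral_combine[OF m(1,2) f] .
  finally show ?thesis unfolding m_def by simp
qed

lemma integral_fold_midpoint_continuous:
  fixes f :: "real \<Rightarrow> 'b::banach"
  assumes "continuous_on {0..2 * m} f" "\<And>u. f u + f (2 * m - u) = g u" "0 \<le> m"
  shows "integral {0..2 * m} f = integral {0..m} g"
  using integral_fold_midpoint[of f 0 "2 * m"] assms
  by (simp add: integrable_continuous_real)

lemma integral_shift_periodic:
  fixes F :: "real \<Rightarrow> 'b::banach"
  assumes F: "continuous_on UNIV F" and per: "\<And>u. F (u + p) = F u" and c: "0 \<le> c" "c \<le> p"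
  shows "integral {-c..p - c} F = integral {0..p} F"
proof -
  have int: "F integrable_on {a..b}" for a b
    by (rule integrable_continuous_real) (rule continuous_on_subset[OF F], simp)
  have "integral {-c..p - c} F = integral {-c..0} F + integral {0..p - c} F"
    using Henstock_Kurzweil_Integration.integral_combine[OF _ _ int, of "-c" 0 "p - c"] c by simp
  also have "integral {-c..0} F = integral {(p - c) - p..p - p} (\<lambda>x. F (x + p))"
    by (simp add: per)
  also have "\<dots> = integral {p - c..p} F"
    by (rule integral_shift_real_ivl)
  also have "integral {p - c..p} F + integral {0..p - c} F = integral {0..p - c} F + integral {p - c..p} F"
    by (rule add.commute)
  also have "\<dots> = integral {0..p} F"
    using Henstock_Kurzweil_Integration.integral_combine[OF _ _ int, of 0 "p - c" p] c by simp
  finally show ?thesis .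
qed

lemma integral_pos_if_pos_on_subinterval:
  fixes f :: "real \<Rightarrow> real"
  assumes f: "f integrable_on {a..b}" and nonneg: "\<And>x. x \<in> {a..b} \<Longrightarrow> 0 \<le> f x"
    and cd: "a \<le> c" "c < d" "d \<le> b" and cont: "continuous_on {c..d} f"
    and pos: "\<And>x. x \<in> {c..d} \<Longrightarrow> 0 < f x"
  shows "0 < integral {a..b} f"
proof -
  obtain x0 where x0: "x0 \<in> {c..d}" "\<And>y. y \<in> {c..d} \<Longrightarrow> f x0 \<le> f y"
    using continuous_attains_inf[of "{c..d}" f] cont cd by auto
  have fcd: "f integrable_on {c..d}"
    by (rule integrable_subinterval_real[OF f]) (use cd in auto)
  have "0 < (d - c) * f x0"
    using cd pos x0 by simp
  also have "\<dots> = integral {c..d} (\<lambda>x. f x0)"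
    using cd by simp
  also have "\<dots> \<le> integral {c..d} f"
    by (rule integral_le) (use fcd x0 in auto)
  also have "\<dots> \<le> integral {a..b} f"
    by (rule integral_subset_le) (use fcd f nonneg cd in auto)
  finally show ?thesis .
qed


section \<open>Exchanging the order of integration on a rectangle\<close>

lemma set_integrable_dominated_section:
  fixes G :: "real \<Rightarrow> real \<Rightarrow> real"
  assumes G[measurable]: "(\<lambda>(x, y). G x y) \<in> borel_measurable (lborel \<Otimes>\<^sub>M lborel)"
    and B: "set_integrable lborel {c..d} B"
    and bound: "\<And>x y. x \<in> {a..b} \<Longrightarrow> y \<in> {c..d} \<Longrightarrow> \<bar>G x y\<bar> \<le> B y"
  shows "x \<in> {a..b} \<Longrightarrow> set_integrable lborel {c..d} (G x)"
    and "y \<in> {c..d} \<Longrightarrow> set_integrable lborel {a..b} (\<lambda>x. G x y)"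
proof -
  show "set_integrable lborel {c..d} (G x)" if "x \<in> {a..b}"
    by (rule set_integrable_bound[OF B])
       (use bound that in \<open>auto simp: set_borel_measurable_def intro!: AE_I2 intro: order_trans[OF _ abs_ge_self]\<close>)
  show "set_integrable lborel {a..b} (\<lambda>x. G x y)" if "y \<in> {c..d}"
  proof (rule set_integrable_bound[of _ _ "\<lambda>_. B y"])
    show "set_integrable lborel {a..b} (\<lambda>_. B y)"
      unfolding set_integrable_def
      by (auto intro!: integrable_mult_left integrable_real_indicator simp: emeasure_lborel_Icc_eq)
  qed (use bound that in \<open>auto simp: set_borel_measurable_def intro!: AE_I2 intro: order_trans[OF _ abs_ge_self]\<close>)
qed

lemma integrable_rectangle_dominated:
  fixes G :: "real \<Rightarrow> real \<Rightarrow> real"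
  assumes G[measurable]: "(\<lambda>(x, y). G x y) \<in> borel_measurable (lborel \<Otimes>\<^sub>M lborel)"
    and B: "set_integrable lborel {c..d} B"
    and bound: "\<And>x y. x \<in> {a..b} \<Longrightarrow> y \<in> {c..d} \<Longrightarrow> \<bar>G x y\<bar> \<le> B y"
  shows "integrable (lborel \<Otimes>\<^sub>M lborel) (\<lambda>(x, y). indicator {a..b} x * indicator {c..d} y * G x y)"
proof -
  define H where "H x y = indicator {a..b} x * indicator {c..d} y * G x y" for x y
  have H_le: "\<bar>H x y\<bar> \<le> indicator {a..b} x * (indicator {c..d} y * B y)" for x y
    using bound by (auto simp: H_def indicator_def)
  have H_x: "integrable lborel (\<lambda>y. H x y)" for x
    using set_integrable_dominated_section(1)[OF G B bound]
    by (auto simp: H_def set_integrable_def mult.assoc indicator_def)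
  have H_norm: "integrable lborel (\<lambda>x. LINT y|lborel. norm (H x y))"
  proof (rule Bochner_Integration.integrable_bound)
    show "integrable lborel (\<lambda>x. indicator {a..b} x * (LINT y:{c..d}|lborel. B y))"
      by (intro integrable_mult_left integrable_real_indicator) (auto simp: emeasure_lborel_Icc_eq)
    show "AE x in lborel. norm (LINT y|lborel. norm (H x y)) \<le> norm (indicator {a..b} x * (LINT y:{c..d}|lborel. B y))"
    proof (intro AE_I2)
      fix x
      have "(LINT y|lborel. norm (H x y)) \<le> (LINT y|lborel. indicator {a..b} x * (indicator {c..d} y * B y))"
        using H_x H_le B
        by (intro integral_mono integrable_norm integrable_mult_right) (auto simp: set_integrable_def)
      then show "norm (LINT y|lborel. norm (H x y)) \<le> norm (indicator {a..b} x * (LINT y:{c..d}|lborel. B y))"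
        by (simp add: set_lebesgue_integral_def integral_nonneg_AE)
    qed
  qed (unfold H_def, measurable)
  have "integrable (lborel \<Otimes>\<^sub>M lborel) (\<lambda>(x, y). H x y)"
    by (rule lborel_pair.Fubini_integrable) (use H_x H_norm in \<open>auto simp: H_def\<close>)
  then show ?thesis
    by (simp add: H_def)
qed

lemma integral_swap_dominated:
  fixes G :: "real \<Rightarrow> real \<Rightarrow> real"
  assumes G[measurable]: "(\<lambda>(x, y). G x y) \<in> borel_measurable (lborel \<Otimes>\<^sub>M lborel)"
    and B: "set_integrable lborel {c..d} B"
    and bound: "\<And>x y. x \<in> {a..b} \<Longrightarrow> y \<in> {c..d} \<Longrightarrow> \<bar>G x y\<bar> \<le> B y"
  shows "integral {a..b} (\<lambda>x. integral {c..d} (G x)) = integral {c..d} (\<lambda>y. integral {a..b} (\<lambda>x. G x y))"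
proof -
  define H where "H x y = indicator {a..b} x * indicator {c..d} y * G x y" for x y
  have G_x: "set_integrable lborel {c..d} (G x)" if "x \<in> {a..b}" for x
    using set_integrable_dominated_section(1)[OF G B bound that] .
  have G_y: "set_integrable lborel {a..b} (\<lambda>x. G x y)" if "y \<in> {c..d}" for y
    using set_integrable_dominated_section(2)[OF G B bound that] .
  have H_int: "integrable (lborel \<Otimes>\<^sub>M lborel) (\<lambda>(x, y). H x y)"
    unfolding H_def by (rule integrable_rectangle_dominated[OF G B bound])
  have inner_x: "(LINT y|lborel. H x y) = indicator {a..b} x * integral {c..d} (G x)" for x
    using set_borel_integral_eq_integral(2)[OF G_x]
    by (auto simp: H_def set_lebesgue_integral_def indicator_def)
  have inner_y: "(LINT x|lborel. H x y) = indicator {c..d} y * integral {a..b} (\<lambda>x. G x y)" for y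
    using set_borel_integral_eq_integral(2)[OF G_y]
    by (auto simp: H_def set_lebesgue_integral_def indicator_def)
  have "integral {a..b} (\<lambda>x. integral {c..d} (G x)) = (LINT x|lborel. LINT y|lborel. H x y)"
    using lborel_pair.integrable_fst[OF H_int]
    by (subst set_borel_integral_eq_integral(2)[symmetric])
       (simp_all add: inner_x set_integrable_def set_lebesgue_integral_def)
  also have "\<dots> = (LINT y|lborel. LINT x|lborel. H x y)"
    by (rule lborel_pair.Fubini_integral[OF H_int, symmetric])
  also have "\<dots> = integral {c..d} (\<lambda>y. integral {a..b} (\<lambda>x. G x y))"
    using lborel_pair.integrable_snd[OF H_int]
    by (subst set_borel_integral_eq_integral(2)[symmetric])
       (simp_all add: inner_y set_integrable_def set_lebesgue_integral_def)
  finally show ?thesis .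
qed


lemma continuous_on_ellipse: "continuous_on S (ellipse R1 R2)"
  unfolding ellipse_def[abs_def] Complex_eq by (intro continuous_intros)

lemma continuous_on_ellipse_deriv: "continuous_on S (ellipse_deriv R1 R2)"
  unfolding ellipse_deriv_def[abs_def] Complex_eq by (intro continuous_intros)

lemma ellipse_sub_ellipse:
  "ellipse R1 R2 (u + v) - ellipse R1 R2 (u - v) = (2 * sin v) *\<^sub>R ellipse_deriv R1 R2 u"
  by (simp add: ellipse_def ellipse_deriv_def complex_eq_iff scaleR_conv_of_real sin_add sin_diff cos_add cos_diff algebra_simps)

lemma ellipse_deriv_sub_ellipse_deriv:
  "ellipse_deriv R1 R2 (u + v) - ellipse_deriv R1 R2 (u - v) = (- 2 * sin v) *\<^sub>R ellipse R1 R2 u"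
  by (simp add: ellipse_def ellipse_deriv_def complex_eq_iff scaleR_conv_of_real sin_add sin_diff cos_add cos_diff algebra_simps)

lemma norm_ellipse_chord:
  "cmod (ellipse R1 R2 x - ellipse R1 R2 (x - y)) = 2 * \<bar>sin (y/2)\<bar> * cmod (ellipse_deriv R1 R2 (x - y/2))"
  using ellipse_sub_ellipse[of R1 R2 "x - y/2" "y/2"] by (simp add: abs_mult)

lemma norm_ellipse_deriv_chord:
  "cmod (ellipse_deriv R1 R2 x - ellipse_deriv R1 R2 (x - y)) = 2 * \<bar>sin (y/2)\<bar> * cmod (ellipse R1 R2 (x - y/2))"
  using ellipse_deriv_sub_ellipse_deriv[of R1 R2 "x - y/2" "y/2"] by (simp add: abs_mult)

lemma norm_ellipse_le: "cmod (ellipse R1 R2 u) \<le> \<bar>R1\<bar> + \<bar>R2\<bar>"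
proof -
  have "cmod (ellipse R1 R2 u) \<le> \<bar>R1 * cos u\<bar> + \<bar>R2 * sin u\<bar>"
    using cmod_le[of "ellipse R1 R2 u"] by (simp add: ellipse_def)
  also have "\<dots> \<le> \<bar>R1\<bar> + \<bar>R2\<bar>"
    by (intro add_mono) (auto simp: abs_mult mult_left_le)
  finally show ?thesis .
qed

lemma norm_ellipse_deriv_squared:
  "cmod (ellipse_deriv R1 R2 u) ^ 2 = (R1^2 + R2^2) / 2 + (R2^2 - R1^2) / 2 * cos (2 * u)"
proof -
  have s: "sin u ^ 2 = (1 - cos (2 * u)) / 2" and c: "cos u ^ 2 = (1 + cos (2 * u)) / 2"
    using cos_double_sin[of u] cos_double_cos[of u] by simp_all
  have "cmod (ellipse_deriv R1 R2 u) ^ 2 = R1^2 * sin u ^ 2 + R2^2 * cos u ^ 2"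
    by (simp add: ellipse_deriv_def cmod_power2 power_mult_distrib)
  then show ?thesis
    unfolding s c by (simp add: field_simps)
qed

lemma min_le_norm_ellipse_deriv:
  assumes "0 < R1" "0 < R2"
  shows "min R1 R2 \<le> cmod (ellipse_deriv R1 R2 u)"
  unfolding cmod_def
proof (rule real_le_rsqrt)
  have "(min R1 R2)^2 = (min R1 R2)^2 * (sin u ^ 2) + (min R1 R2)^2 * cos u ^ 2"
    by (simp flip: distrib_left)
  also have "\<dots> \<le> R1^2 * sin u ^ 2 + R2^2 * cos u ^ 2"
    using assms by (intro add_mono mult_right_mono power_mono) auto
  finally show "(min R1 R2)^2 \<le> (Re (ellipse_deriv R1 R2 u))^2 + (Im (ellipse_deriv R1 R2 u))^2"
    by (simp add: ellipse_deriv_def power_mult_distrib)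
qed

lemma inner_ellipse_deriv_chord_normal:
  "inner (ellipse_deriv R1 R2 x - ellipse_deriv R1 R2 (x - y)) (perp (ellipse_deriv R1 R2 x)) = R1 * R2 * sin y"
proof -
  have "inner (ellipse_deriv R1 R2 x - ellipse_deriv R1 R2 (x - y)) (perp (ellipse_deriv R1 R2 x))
      = R1 * (R2 * (cos x * (cos x * sin y))) + R1 * (R2 * (sin x * (sin x * sin y)))"
    by (simp add: ellipse_deriv_def perp_def inner_complex_def sin_diff cos_diff algebra_simps)
  also have "\<dots> = R1 * R2 * sin y * (sin x ^ 2 + cos x ^ 2)"
    by algebra
  finally show ?thesis by simp
qed

lemma inner_rotation_normal:
  "inner (\<i> * complex_of_real \<Omega> * ellipse R1 R2 x) (perp (ellipse_deriv R1 R2 x))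
     = \<Omega> * (R2^2 - R1^2) * sin x * cos x"
  by (simp add: ellipse_deriv_def ellipse_def perp_def inner_complex_def algebra_simps power2_eq_square)


section \<open>An integrable majorant for the singular kernels\<close>

text \<open>
  As sin(y/2) \<ge> min y (2 pi - y) / 8, the factor sin(y/2)^(1 - alpha) carried by the kernels is
  dominated by the integrable singularities y^(1 - alpha) and (2 pi - y)^(1 - alpha) when
  alpha > 1; the constant 1 covers alpha \<le> 1.
\<close>

definition kernel_majorant :: "real \<Rightarrow> real \<Rightarrow> real" where
  "kernel_majorant \<alpha> y = 1 + 8 powr (\<alpha> - 1) * (y powr (1 - \<alpha>) + (2 * pi - y) powr (1 - \<alpha>))"

lemma one_le_kernel_majorant: "1 \<le> kernel_majorant \<alpha> y"
  unfolding kernel_majorant_def by (simp add: add_nonneg_nonneg)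

lemma sin_half_powr_le_kernel_majorant:
  assumes "\<alpha> \<le> 2" "0 < y" "y < 2 * pi"
  shows "sin (y/2) powr (1 - \<alpha>) \<le> kernel_majorant \<alpha> y"
proof (cases "\<alpha> \<le> 1")
  case True
  have "sin (y/2) powr (1 - \<alpha>) \<le> 1"
    using True assms by (intro powr_le1 sin_ge_zero) auto
  then show ?thesis using one_le_kernel_majorant[of \<alpha> y] by linarith
next
  case False
  define d where "d = min y (2 * pi - y)"
  have d: "0 < d" "d \<le> y" "d \<le> 2 * pi - y"
    using assms by (auto simp: d_def)
  have "d/8 \<le> sin (y/2)"
  proof (cases "y \<le> pi")
    case True
    then show ?thesis
      using quarter_le_sin[of "y/2"] assms d by simp
  next
    case False
    then show ?thesis
      using quarter_le_sin[of "pi - y/2"] assms d by (simp add: d_def)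
  qed
  then have "sin (y/2) powr (1 - \<alpha>) \<le> (d/8) powr (1 - \<alpha>)"
    using False d by (intro powr_mono2') auto
  also have "\<dots> = 8 powr (\<alpha> - 1) * d powr (1 - \<alpha>)"
    using d by (simp add: powr_divide powr_diff)
  also have "\<dots> \<le> 8 powr (\<alpha> - 1) * (y powr (1 - \<alpha>) + (2 * pi - y) powr (1 - \<alpha>))"
    by (intro mult_left_mono) (auto simp: d_def min_def)
  finally show ?thesis unfolding kernel_majorant_def by linarith
qed

lemma kernel_majorant_integrable:
  assumes "\<alpha> < 2"
  shows "kernel_majorant \<alpha> integrable_on {0..2 * pi}"
proof -
  have i1: "(\<lambda>y. y powr (1 - \<alpha>)) integrable_on {0..2 * pi}"
    using assms by (intro integrable_on_powr_from_0) auto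
  have i2: "(\<lambda>y. (2 * pi - y) powr (1 - \<alpha>)) integrable_on {0..2 * pi}"
    using integrable_reflect_interval[OF i1] by simp
  have "(\<lambda>y. 8 powr (\<alpha> - 1) * (y powr (1 - \<alpha>) + (2 * pi - y) powr (1 - \<alpha>)))
          integrable_on {0..2 * pi}"
    using integrable_on_cmult_left[OF integrable_add[OF i1 i2]] by simp
  then show ?thesis
    unfolding kernel_majorant_def by (intro integrable_add integrable_const_ivl)
qed

lemma kernel_majorant_set_integrable:
  assumes "\<alpha> < 2"
  shows "set_integrable lborel {0..2 * pi} (kernel_majorant \<alpha>)"
proof -
  have "kernel_majorant \<alpha> absolutely_integrable_on {0..2 * pi}"
    using kernel_majorant_integrable[OF assms] one_le_kernel_majorant[of \<alpha>]
    by (intro nonnegative_absolutely_integrable_1) (auto intro: order_trans[OF zero_le_one])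
  moreover have "(\<lambda>y. indicator {0..2 * pi} y *\<^sub>R kernel_majorant \<alpha> y) \<in> borel_measurable borel"
    unfolding kernel_majorant_def by measurable
  ultimately show ?thesis
    unfolding absolutely_integrable_on_def set_integrable_def by (simp add: integrable_completion)
qed

lemma set_integrable_if_le_kernel_majorant:
  fixes f :: "real \<Rightarrow> 'b::{banach, second_countable_topology}"
  assumes "\<alpha> < 2" "f \<in> borel_measurable borel"
    and "\<And>y. y \<in> {0..2 * pi} \<Longrightarrow> norm (f y) \<le> C * kernel_majorant \<alpha> y"
  shows "set_integrable lborel {0..2 * pi} f"
proof (rule set_integrable_bound)
  show "set_integrable lborel {0..2 * pi} (\<lambda>y. C * kernel_majorant \<alpha> y)"
    using kernel_majorant_set_integrable[OF assms(1)] by (rule set_integrable_mult_right)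
  show "set_borel_measurable lborel {0..2 * pi} f"
    using assms(2) unfolding set_borel_measurable_def by measurable
  show "AE y in lborel. y \<in> {0..2 * pi} \<longrightarrow> norm (f y) \<le> norm (C * kernel_majorant \<alpha> y)"
    using assms(3) by (auto intro!: AE_I2 intro: order_trans[OF _ abs_ge_self])
qed


definition normal_kernel :: "real \<Rightarrow> real \<Rightarrow> real \<Rightarrow> real \<Rightarrow> real \<Rightarrow> real" where
  "normal_kernel \<alpha> R1 R2 x y = sin y / cmod (ellipse R1 R2 x - ellipse R1 R2 (x - y)) powr \<alpha>"

definition velocity_integrand :: "real \<Rightarrow> real \<Rightarrow> real \<Rightarrow> real \<Rightarrow> real \<Rightarrow> complex" where
  "velocity_integrand \<alpha> R1 R2 x y = (ellipse_deriv R1 R2 x - ellipse_deriv R1 R2 (x - y)) /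
      complex_of_real (cmod (ellipse R1 R2 x - ellipse R1 R2 (x - y)) powr \<alpha>)"

lemma borel_measurable_ellipse[measurable]: "ellipse R1 R2 \<in> borel_measurable borel"
  by (intro borel_measurable_continuous_onI continuous_on_ellipse)

lemma borel_measurable_ellipse_deriv[measurable]: "ellipse_deriv R1 R2 \<in> borel_measurable borel"
  by (intro borel_measurable_continuous_onI continuous_on_ellipse_deriv)

lemma borel_measurable_normal_kernel[measurable]:
  "(\<lambda>(x, y). normal_kernel \<alpha> R1 R2 x y) \<in> borel_measurable (lborel \<Otimes>\<^sub>M lborel)"
  unfolding normal_kernel_def by measurable

lemma borel_measurable_velocity_integrand:
  "velocity_integrand \<alpha> R1 R2 x \<in> borel_measurable borel"
  unfolding velocity_integrand_def by measurable

lemma chord_quotient_le_kernel_majorant: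
  fixes N D K m :: real
  assumes "0 < \<alpha>" "\<alpha> \<le> 2" "0 \<le> y" "y \<le> 2 * pi" "0 < m" "0 \<le> K"
    and N: "0 \<le> N" "N \<le> 2 * sin (y/2) * K" and D: "2 * sin (y/2) * m \<le> D"
  shows "N / D powr \<alpha> \<le> 2 * K * (2 * m) powr (-\<alpha>) * kernel_majorant \<alpha> y"
proof -
  have s0: "0 \<le> sin (y/2)"
    using assms by (intro sin_ge_zero) auto
  have rhs: "0 \<le> 2 * K * (2 * m) powr (-\<alpha>) * kernel_majorant \<alpha> y"
    using assms one_le_kernel_majorant[of \<alpha> y] by simp
  show ?thesis
  proof (cases "sin (y/2) = 0")
    case True
    then show ?thesis using N rhs by simp
  next
    case False
    define s where "s = sin (y/2)"
    have s: "0 < s" using False s0 by (simp add: s_def)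
    have y: "0 < y" "y < 2 * pi"
      using False assms by (auto simp: le_less)
    have "N / D powr \<alpha> \<le> (2 * s * K) / (2 * s * m) powr \<alpha>"
      using N D s assms unfolding s_def[symmetric]
      by (intro frac_le powr_mono2 mult_pos_pos) auto
    also have "\<dots> = 2 * K * (2 * m) powr (-\<alpha>) * s powr (1 - \<alpha>)"
    proof -
      have "(2 * s * m) powr \<alpha> = s powr \<alpha> * (2 * m) powr \<alpha>"
        using s assms by (simp add: powr_mult[symmetric] mult_ac)
      moreover have "s powr (1 - \<alpha>) = s / s powr \<alpha>"
        using s by (simp add: powr_diff)
      ultimately show ?thesis
        by (simp add: powr_minus divide_inverse mult_ac)
    qed
    also have "\<dots> \<le> 2 * K * (2 * m) powr (-\<alpha>) * kernel_majorant \<alpha> y"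
      using sin_half_powr_le_kernel_majorant[OF assms(2) y] assms
      by (intro mult_left_mono) (auto simp: s_def)
    finally show ?thesis .
  qed
qed

lemma abs_normal_kernel_le:
  assumes "0 < \<alpha>" "\<alpha> \<le> 2" "0 < R1" "0 < R2" "0 \<le> y" "y \<le> 2 * pi"
  shows "\<bar>normal_kernel \<alpha> R1 R2 x y\<bar> \<le> 2 * (2 * min R1 R2) powr (-\<alpha>) * kernel_majorant \<alpha> y"
proof -
  have s0: "0 \<le> sin (y/2)"
    using assms by (intro sin_ge_zero) auto
  have "\<bar>sin y\<bar> \<le> 2 * sin (y/2) * 1"
    using s0 sin_double[of "y/2"] by (simp add: abs_mult mult_left_le)
  moreover have "2 * sin (y/2) * min R1 R2 \<le> cmod (ellipse R1 R2 x - ellipse R1 R2 (x - y))"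
    unfolding norm_ellipse_chord using s0 min_le_norm_ellipse_deriv[OF assms(3,4)]
    by (simp add: mult_left_mono)
  ultimately show ?thesis
    using chord_quotient_le_kernel_majorant[of \<alpha> y "min R1 R2" 1 "\<bar>sin y\<bar>"] assms
    by (simp add: normal_kernel_def abs_div)
qed

lemma norm_velocity_integrand_le:
  assumes "0 < \<alpha>" "\<alpha> \<le> 2" "0 < R1" "0 < R2" "0 \<le> y" "y \<le> 2 * pi"
  shows "cmod (velocity_integrand \<alpha> R1 R2 x y)
           \<le> 2 * (R1 + R2) * (2 * min R1 R2) powr (-\<alpha>) * kernel_majorant \<alpha> y"
proof -
  have s0: "0 \<le> sin (y/2)"
    using assms by (intro sin_ge_zero) auto
  have "cmod (ellipse_deriv R1 R2 x - ellipse_deriv R1 R2 (x - y)) \<le> 2 * sin (y/2) * (R1 + R2)"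
    unfolding norm_ellipse_deriv_chord using s0 norm_ellipse_le[of R1 R2 "x - y/2"] assms
    by (simp add: mult_left_mono)
  moreover have "2 * sin (y/2) * min R1 R2 \<le> cmod (ellipse R1 R2 x - ellipse R1 R2 (x - y))"
    unfolding norm_ellipse_chord using s0 min_le_norm_ellipse_deriv[OF assms(3,4)]
    by (simp add: mult_left_mono)
  ultimately show ?thesis
    using chord_quotient_le_kernel_majorant[of \<alpha> y "min R1 R2" "R1 + R2"] assms
    by (simp add: velocity_integrand_def norm_divide)
qed

lemma velocity_integrand_set_integrable:
  assumes "0 < \<alpha>" "\<alpha> < 2" "0 < R1" "0 < R2"
  shows "set_integrable lborel {0..2 * pi} (velocity_integrand \<alpha> R1 R2 x)"
proof (rule set_integrable_if_le_kernel_majorant[OF assms(2) borel_measurable_velocity_integrand])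
  show "norm (velocity_integrand \<alpha> R1 R2 x y)
          \<le> 2 * (R1 + R2) * (2 * min R1 R2) powr (-\<alpha>) * kernel_majorant \<alpha> y"
    if "y \<in> {0..2 * pi}" for y
    using norm_velocity_integrand_le[of \<alpha> R1 R2 y x] assms that by simp
qed

lemma inner_velocity_integrand_normal:
  "inner (velocity_integrand \<alpha> R1 R2 x y) (perp (ellipse_deriv R1 R2 x)) = R1 * R2 * normal_kernel \<alpha> R1 R2 x y"
proof -
  have "velocity_integrand \<alpha> R1 R2 x y = inverse (cmod (ellipse R1 R2 x - ellipse R1 R2 (x - y)) powr \<alpha>) *\<^sub>R
          (ellipse_deriv R1 R2 x - ellipse_deriv R1 R2 (x - y))"
    by (simp add: velocity_integrand_def scaleR_conv_of_real divide_inverse_commute of_real_inverse)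
  then show ?thesis
    by (simp add: inner_ellipse_deriv_chord_normal normal_kernel_def divide_inverse mult_ac)
qed

lemma inner_patch_velocity_normal:
  assumes "0 < \<alpha>" "\<alpha> < 2" "0 < R1" "0 < R2"
  shows "inner (patch_velocity \<alpha> \<theta>1 \<theta>2 (ellipse R1 R2) (ellipse_deriv R1 R2) x) (perp (ellipse_deriv R1 R2 x))
       = c_alpha \<alpha> \<theta>1 \<theta>2 * R1 * R2 * integral {0..2 * pi} (normal_kernel \<alpha> R1 R2 x)"
proof -
  let ?n = "perp (ellipse_deriv R1 R2 x)"
  have v: "patch_velocity \<alpha> \<theta>1 \<theta>2 (ellipse R1 R2) (ellipse_deriv R1 R2) x
        = c_alpha \<alpha> \<theta>1 \<theta>2 *\<^sub>R integral {0..2 * pi} (velocity_integrand \<alpha> R1 R2 x)"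
    by (simp add: patch_velocity_def velocity_integrand_def[abs_def] scaleR_conv_of_real)
  have "velocity_integrand \<alpha> R1 R2 x integrable_on {0..2 * pi}"
    using velocity_integrand_set_integrable[OF assms] by (rule set_borel_integral_eq_integral)
  then have "inner (integral {0..2 * pi} (velocity_integrand \<alpha> R1 R2 x)) ?n
           = integral {0..2 * pi} (\<lambda>y. inner (velocity_integrand \<alpha> R1 R2 x y) ?n)"
    using integral_linear[OF _ bounded_linear_inner_left[of ?n]] by (simp add: o_def)
  also have "\<dots> = R1 * R2 * integral {0..2 * pi} (normal_kernel \<alpha> R1 R2 x)"
    by (simp add: inner_velocity_integrand_normal)
  finally show ?thesis
    unfolding v by (simp add: mult_ac)
qed


section \<open>Factorisation of the kernel\<close>

definition circle_kernel :: "real \<Rightarrow> real \<Rightarrow> real" where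
  "circle_kernel \<alpha> y = sin y / (2 * \<bar>sin (y/2)\<bar>) powr \<alpha>"

definition ellipse_weight :: "real \<Rightarrow> real \<Rightarrow> real \<Rightarrow> real \<Rightarrow> real" where
  "ellipse_weight \<alpha> R1 R2 u = cmod (ellipse_deriv R1 R2 u) powr (-\<alpha>)"

lemma normal_kernel_factor:
  "normal_kernel \<alpha> R1 R2 x y = circle_kernel \<alpha> y * ellipse_weight \<alpha> R1 R2 (x - y/2)"
proof -
  have "cmod (ellipse R1 R2 x - ellipse R1 R2 (x - y)) powr \<alpha>
      = (2 * \<bar>sin (y/2)\<bar>) powr \<alpha> * cmod (ellipse_deriv R1 R2 (x - y/2)) powr \<alpha>"
    unfolding norm_ellipse_chord by (simp add: powr_mult)
  then show ?thesis
    unfolding normal_kernel_def circle_kernel_def ellipse_weight_def powr_minus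
    by (simp only: divide_inverse inverse_mult_distrib mult.assoc)
qed

lemma circle_kernel_eq_normal_kernel: "circle_kernel \<alpha> = normal_kernel \<alpha> 1 1 0"
proof
  fix y
  have "cmod (ellipse_deriv 1 1 u) = 1" for u
    by (simp add: ellipse_deriv_def cmod_def)
  then show "circle_kernel \<alpha> y = normal_kernel \<alpha> 1 1 0 y"
    by (simp add: normal_kernel_factor ellipse_weight_def)
qed

lemma ellipse_weight_eq_cos_double:
  "ellipse_weight \<alpha> R1 R2 u = ((R1^2 + R2^2) / 2 + (R2^2 - R1^2) / 2 * cos (2 * u)) powr (-\<alpha>/2)"
proof -
  have "cmod (ellipse_deriv R1 R2 u) powr (-\<alpha>) = (cmod (ellipse_deriv R1 R2 u) ^ 2) powr (-\<alpha>/2)"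
  proof (cases "ellipse_deriv R1 R2 u = 0")
    case False
    then have "cmod (ellipse_deriv R1 R2 u) ^ 2 = cmod (ellipse_deriv R1 R2 u) powr 2"
      by (simp add: powr_realpow)
    then have "(cmod (ellipse_deriv R1 R2 u) ^ 2) powr (-\<alpha>/2) = cmod (ellipse_deriv R1 R2 u) powr (2 * (-\<alpha>/2))"
      by (simp only: powr_powr)
    then show ?thesis by simp
  qed simp
  then show ?thesis
    by (simp add: ellipse_weight_def norm_ellipse_deriv_squared)
qed

lemma ellipse_weight_periodic: "ellipse_weight \<alpha> R1 R2 (u + pi) = ellipse_weight \<alpha> R1 R2 u"
proof -
  have "ellipse_deriv R1 R2 (u + pi) = - ellipse_deriv R1 R2 u"
    by (simp add: ellipse_deriv_def complex_eq_iff)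
  then show ?thesis by (simp add: ellipse_weight_def)
qed

lemma ellipse_weight_reflect: "ellipse_weight \<alpha> R1 R2 (pi - u) = ellipse_weight \<alpha> R1 R2 u"
  by (simp add: ellipse_weight_def ellipse_deriv_def cmod_def)

lemma continuous_on_ellipse_weight:
  fixes f :: "real \<Rightarrow> real"
  assumes "0 < R1" "0 < R2" "continuous_on S f"
  shows "continuous_on S (\<lambda>u. ellipse_weight \<alpha> R1 R2 (f u))"
proof -
  have "cmod (ellipse_deriv R1 R2 u) \<noteq> 0" for u
    using min_le_norm_ellipse_deriv[OF assms(1,2), of u] assms by auto
  then have "continuous_on UNIV (ellipse_weight \<alpha> R1 R2)"
    unfolding ellipse_weight_def
    by (intro continuous_intros continuous_on_compose2[OF continuous_on_ellipse_deriv[of UNIV]]) auto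
  then show ?thesis
    using continuous_on_compose2[OF _ assms(3)] by blast
qed


section \<open>The sin 4x moment of the normal velocity\<close>

definition weight_cos4_coeff :: "real \<Rightarrow> real \<Rightarrow> real \<Rightarrow> real" where
  "weight_cos4_coeff \<alpha> R1 R2 = integral {0..pi} (\<lambda>u. ellipse_weight \<alpha> R1 R2 u * cos (4 * u))"

lemma integral_ellipse_weight_sin4:
  assumes "0 < R1" "0 < R2"
  shows "integral {0..pi} (\<lambda>u. ellipse_weight \<alpha> R1 R2 u * sin (4 * u)) = 0"
proof -
  let ?f = "\<lambda>u. ellipse_weight \<alpha> R1 R2 u * sin (4 * u)"
  have "?f integrable_on {0..pi}"
    by (intro integrable_continuous_real continuous_intros continuous_on_ellipse_weight assms)
  then have "integral {0..pi} (\<lambda>u. ?f (0 + pi - u)) = integral {0..pi} ?f"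
    by (rule integral_reflect_interval)
  moreover have "?f (0 + pi - u) = - ?f u" for u
  proof -
    have "sin (4 * (pi - u)) = - sin (4 * u)"
      by (simp add: right_diff_distrib sin_diff)
    then show ?thesis
      by (simp add: ellipse_weight_reflect)
  qed
  ultimately show ?thesis by simp
qed

lemma integral_shifted_ellipse_weight_sin4:
  assumes "0 < R1" "0 < R2" "0 \<le> c" "c \<le> pi"
  shows "integral {0..pi} (\<lambda>x. ellipse_weight \<alpha> R1 R2 (x - c) * sin (4 * x))
       = sin (4 * c) * weight_cos4_coeff \<alpha> R1 R2"
proof -
  let ?w = "ellipse_weight \<alpha> R1 R2"
  have w: "continuous_on S (\<lambda>u. ?w (f u))" if "continuous_on S f" for S :: "real set" and f :: "real \<Rightarrow> real"
    by (rule continuous_on_ellipse_weight[OF assms(1,2) that])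
  have sin4: "sin (4 * (u + pi) + 4 * c) = sin (4 * u + 4 * c)" for u
    by (simp add: distrib_left sin_add cos_add)
  have "integral {0..pi} (\<lambda>x. ?w (x - c) * sin (4 * x))
      = integral {0 - c..pi - c} (\<lambda>x. ?w ((x + c) - c) * sin (4 * (x + c)))"
    by (rule integral_shift_real_ivl[symmetric])
  also have "\<dots> = integral {-c..pi - c} (\<lambda>u. ?w u * sin (4 * u + 4 * c))"
    by (simp add: algebra_simps)
  also have "\<dots> = integral {0..pi} (\<lambda>u. ?w u * sin (4 * u + 4 * c))"
    using assms(3,4) by (intro integral_shift_periodic continuous_intros w) (simp_all only: ellipse_weight_periodic sin4)
  also have "\<dots> = cos (4 * c) * integral {0..pi} (\<lambda>u. ?w u * sin (4 * u))
                 + sin (4 * c) * weight_cos4_coeff \<alpha> R1 R2"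
    unfolding weight_cos4_coeff_def sin_add
    by (subst integral_add[symmetric] integral_mult_right[symmetric],
        auto intro!: integrable_continuous_real continuous_intros w integral_cong simp: algebra_simps)+
  finally show ?thesis
    using integral_ellipse_weight_sin4[OF assms(1,2)] by simp
qed

lemma integral_sin4_normal_kernel:
  assumes "0 < \<alpha>" "\<alpha> < 2" "0 < R1" "0 < R2"
  shows "integral {0..pi} (\<lambda>x. sin (4 * x) * integral {0..2 * pi} (normal_kernel \<alpha> R1 R2 x))
       = weight_cos4_coeff \<alpha> R1 R2 * integral {0..2 * pi} (\<lambda>y. circle_kernel \<alpha> y * sin (2 * y))"
proof -
  define C where "C = 2 * (2 * min R1 R2) powr (-\<alpha>)"
  have bound: "\<bar>sin (4 * x) * normal_kernel \<alpha> R1 R2 x y\<bar> \<le> C * kernel_majorant \<alpha> y"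
    if "y \<in> {0..2 * pi}" for x y
  proof -
    have "\<bar>sin (4 * x) * normal_kernel \<alpha> R1 R2 x y\<bar> \<le> 1 * \<bar>normal_kernel \<alpha> R1 R2 x y\<bar>"
      unfolding abs_mult by (intro mult_right_mono) auto
    also have "\<dots> \<le> C * kernel_majorant \<alpha> y"
      using abs_normal_kernel_le[of \<alpha> R1 R2 y x] assms that by (simp add: C_def)
    finally show ?thesis .
  qed
  have inner: "integral {0..pi} (\<lambda>x. sin (4 * x) * normal_kernel \<alpha> R1 R2 x y)
             = weight_cos4_coeff \<alpha> R1 R2 * (circle_kernel \<alpha> y * sin (2 * y))"
    if "y \<in> {0..2 * pi}" for y
  proof -
    have "integral {0..pi} (\<lambda>x. sin (4 * x) * normal_kernel \<alpha> R1 R2 x y)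
        = circle_kernel \<alpha> y * integral {0..pi} (\<lambda>x. ellipse_weight \<alpha> R1 R2 (x - y/2) * sin (4 * x))"
      by (simp add: normal_kernel_factor mult_ac)
    also have "\<dots> = circle_kernel \<alpha> y * (sin (4 * (y/2)) * weight_cos4_coeff \<alpha> R1 R2)"
      using that assms by (simp add: integral_shifted_ellipse_weight_sin4)
    finally show ?thesis by simp
  qed
  have "integral {0..pi} (\<lambda>x. sin (4 * x) * integral {0..2 * pi} (normal_kernel \<alpha> R1 R2 x))
      = integral {0..pi} (\<lambda>x. integral {0..2 * pi} (\<lambda>y. sin (4 * x) * normal_kernel \<alpha> R1 R2 x y))"
    by simp
  also have "\<dots> = integral {0..2 * pi} (\<lambda>y. integral {0..pi} (\<lambda>x. sin (4 * x) * normal_kernel \<alpha> R1 R2 x y))"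
  proof (rule integral_swap_dominated)
    show "set_integrable lborel {0..2 * pi} (\<lambda>y. C * kernel_majorant \<alpha> y)"
      using kernel_majorant_set_integrable[OF assms(2)] by (rule set_integrable_mult_right)
  qed (use bound in auto)
  also have "\<dots> = integral {0..2 * pi} (\<lambda>y. weight_cos4_coeff \<alpha> R1 R2 * (circle_kernel \<alpha> y * sin (2 * y)))"
    by (intro integral_cong inner)
  finally show ?thesis by simp
qed


section \<open>Positivity of the two factors\<close>

text \<open>
  Both sides are values of psi(t) = (p + q t)^(-alpha/2) + (p - q t)^(-alpha/2), at t = sin 2u
  and t = cos 2u, and psi is strictly increasing on [0, 1].
\<close>

lemma ellipse_weight_quarter_sum_less:
  assumes "0 < \<alpha>" "0 < R1" "0 < R2" "R1 \<noteq> R2" "0 \<le> u" "u < pi/8"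
  shows "ellipse_weight \<alpha> R1 R2 (pi/4 - u) + ellipse_weight \<alpha> R1 R2 (pi/4 + u)
       < ellipse_weight \<alpha> R1 R2 u + ellipse_weight \<alpha> R1 R2 (pi/2 - u)"
proof -
  define p where "p = (R1^2 + R2^2) / 2"
  define q where "q = (R2^2 - R1^2) / 2"
  define \<psi> where "\<psi> t = (p + q * t) powr (-\<alpha>/2) + (p - q * t) powr (-\<alpha>/2)" for t
  let ?w = "ellipse_weight \<alpha> R1 R2"
  have q: "q \<noteq> 0" "\<bar>q\<bar> < p"
    using assms power2_eq_iff_nonneg[of R1 R2] by (auto simp: p_def q_def abs_less_iff)
  have w: "?w v = (p + q * cos (2 * v)) powr (-\<alpha>/2)" for v
    by (simp add: ellipse_weight_eq_cos_double p_def q_def)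
  have "?w u + ?w (pi/2 - u) = \<psi> (cos (2 * u))"
    by (simp add: w \<psi>_def right_diff_distrib)
  moreover have "?w (pi/4 - u) + ?w (pi/4 + u) = \<psi> (sin (2 * u))"
    by (simp add: w \<psi>_def right_diff_distrib distrib_left cos_diff cos_add)
  moreover have "sin (2 * u) < sin (pi/2 - 2 * u)"
    using assms by (intro sin_monotone_2pi) auto
  moreover have "0 \<le> sin (2 * u)"
    using assms by (intro sin_ge_zero) auto
  ultimately show ?thesis
    using powr_neg_symmetric_sum_strict_mono[of "\<alpha>/2" q p "sin (2 * u)" "cos (2 * u)"] q assms(1)
    by (simp add: \<psi>_def sin_cos_eq)
qed

lemma weight_cos4_coeff_folded:
  assumes "0 < R1" "0 < R2"
  shows "weight_cos4_coeff \<alpha> R1 R2 = integral {0..pi/8} (\<lambda>u. 2 * cos (4 * u) *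
           ((ellipse_weight \<alpha> R1 R2 u + ellipse_weight \<alpha> R1 R2 (pi/2 - u))
          - (ellipse_weight \<alpha> R1 R2 (pi/4 - u) + ellipse_weight \<alpha> R1 R2 (pi/4 + u))))"
proof -
  let ?w = "ellipse_weight \<alpha> R1 R2"
  have w: "continuous_on S (\<lambda>u. ?w (f u))" if "continuous_on S f" for S :: "real set" and f
    by (rule continuous_on_ellipse_weight[OF assms that])
  have "weight_cos4_coeff \<alpha> R1 R2 = integral {0..pi/2} (\<lambda>u. 2 * (?w u * cos (4 * u)))"
    unfolding weight_cos4_coeff_def
    by (rule integral_fold_midpoint_continuous[of "pi/2", simplified])
       (auto intro!: continuous_intros w simp: ellipse_weight_reflect right_diff_distrib cos_diff)
  also have "\<dots> = integral {0..pi/4} (\<lambda>u. 2 * cos (4 * u) * (?w u + ?w (pi/2 - u)))"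
    by (rule integral_fold_midpoint_continuous[of "pi/4", simplified])
       (auto intro!: continuous_intros w simp: right_diff_distrib cos_diff algebra_simps)
  also have "\<dots> = integral {0..pi/8} (\<lambda>u. 2 * cos (4 * u) *
                      ((?w u + ?w (pi/2 - u)) - (?w (pi/4 - u) + ?w (pi/4 + u))))"
    by (rule integral_fold_midpoint_continuous[of "pi/8", simplified])
       (auto intro!: continuous_intros w simp: right_diff_distrib cos_diff algebra_simps)
  finally show ?thesis .
qed

lemma weight_cos4_coeff_pos:
  assumes "0 < \<alpha>" "0 < R1" "0 < R2" "R1 \<noteq> R2"
  shows "0 < weight_cos4_coeff \<alpha> R1 R2"
  unfolding weight_cos4_coeff_folded[OF assms(2,3)]
proof (rule integral_pos_if_pos_on_subinterval[where c = 0 and d = "pi/16"])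
  let ?w = "ellipse_weight \<alpha> R1 R2"
  show "0 \<le> 2 * cos (4 * u) * ((?w u + ?w (pi/2 - u)) - (?w (pi/4 - u) + ?w (pi/4 + u)))"
    if "u \<in> {0..pi/8}" for u
  proof (cases "u = pi/8")
    case False
    then show ?thesis
      using that ellipse_weight_quarter_sum_less[OF assms, of u]
      by (intro mult_nonneg_nonneg cos_ge_zero) auto
  next
    case True
    then have "4 * u = pi/2" by simp
    then have "cos (4 * u) = 0" by (simp only: cos_pi_half)
    then show ?thesis by simp
  qed
  show "0 < 2 * cos (4 * u) * ((?w u + ?w (pi/2 - u)) - (?w (pi/4 - u) + ?w (pi/4 + u)))"
    if "u \<in> {0..pi/16}" for u
  proof -
    have "0 \<le> u" "u \<le> pi/16"
      using that by auto
    then have u: "0 \<le> u" "8 * u < pi"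
      using pi_gt_zero by linarith+
    then show ?thesis
      using ellipse_weight_quarter_sum_less[OF assms, of u]
      by (intro mult_pos_pos cos_gt_zero_pi) auto
  qed
qed (auto intro!: continuous_intros continuous_on_ellipse_weight assms integrable_continuous_real)

lemma circle_kernel_reflect: "circle_kernel \<alpha> (2 * pi - y) = - circle_kernel \<alpha> y"
proof -
  have "sin ((2 * pi - y) / 2) = sin (y/2)"
    using sin_pi_minus[of "y/2"] by (simp add: diff_divide_distrib)
  then show ?thesis
    by (simp add: circle_kernel_def)
qed

definition folded_circle_kernel :: "real \<Rightarrow> real \<Rightarrow> real" where
  "folded_circle_kernel \<alpha> y = sin (2 * y) * sin y * ((2 * sin (y/2)) powr (-\<alpha>) - (2 * cos (y/2)) powr (-\<alpha>))"

lemma circle_kernel_sin2_fold: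
  assumes "0 \<le> y" "y \<le> pi"
  shows "circle_kernel \<alpha> y * sin (2 * y) + circle_kernel \<alpha> (pi - y) * sin (2 * (pi - y))
       = folded_circle_kernel \<alpha> y"
proof -
  have "sin ((pi - y) / 2) = cos (y/2)"
    by (simp add: diff_divide_distrib sin_diff)
  moreover have "0 \<le> sin (y/2)" "0 \<le> cos (y/2)"
    using assms by (auto intro!: sin_ge_zero cos_ge_zero)
  ultimately have "circle_kernel \<alpha> y = sin y * (2 * sin (y/2)) powr (-\<alpha>)"
    and "circle_kernel \<alpha> (pi - y) = sin y * (2 * cos (y/2)) powr (-\<alpha>)"
    unfolding circle_kernel_def powr_minus divide_inverse by simp_all
  moreover have "sin (2 * (pi - y)) = - sin (2 * y)"
    by (simp add: right_diff_distrib sin_diff)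
  ultimately show ?thesis
    unfolding folded_circle_kernel_def
    by (simp only: right_diff_distrib mult_minus_right) (simp only: mult_ac)
qed

lemma circle_kernel_sin2_set_integrable:
  assumes "0 < \<alpha>" "\<alpha> < 2"
  shows "set_integrable lborel {0..2 * pi} (\<lambda>y. circle_kernel \<alpha> y * sin (2 * y))"
proof (rule set_integrable_if_le_kernel_majorant[OF assms(2)])
  show "(\<lambda>y. circle_kernel \<alpha> y * sin (2 * y)) \<in> borel_measurable borel"
    unfolding circle_kernel_def by measurable
  show "norm (circle_kernel \<alpha> y * sin (2 * y)) \<le> 2 * (2 * min 1 1) powr (-\<alpha>) * kernel_majorant \<alpha> y"
    if "y \<in> {0..2 * pi}" for y
  proof -
    have "norm (circle_kernel \<alpha> y * sin (2 * y)) \<le> \<bar>normal_kernel \<alpha> 1 1 0 y\<bar>"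
      by (simp add: circle_kernel_eq_normal_kernel abs_mult mult_left_le)
    also have "\<dots> \<le> 2 * (2 * min 1 1) powr (-\<alpha>) * kernel_majorant \<alpha> y"
      using that assms by (intro abs_normal_kernel_le) auto
    finally show ?thesis .
  qed
qed

lemma folded_circle_kernel_nonneg:
  assumes "0 < \<alpha>" "0 \<le> y" "y \<le> pi/2"
  shows "0 \<le> folded_circle_kernel \<alpha> y"
    and "pi/8 \<le> y \<Longrightarrow> y \<le> 3 * pi/8 \<Longrightarrow>
           0 < folded_circle_kernel \<alpha> y"
proof -
  have sc: "sin (y/2) \<le> cos (y/2)"
    using sin_monotone_2pi_le[of "y/2" "pi/2 - y/2"] assms by (simp add: sin_cos_eq)
  have s: "0 \<le> sin (2 * y)" "0 \<le> sin y" "0 \<le> sin (y/2)"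
    using assms by (auto intro!: sin_ge_zero)
  show "0 \<le> folded_circle_kernel \<alpha> y"
  proof (cases "y = 0")
    case False
    then have "0 < sin (y/2)"
      using assms by (intro sin_gt_zero) auto
    then have "(2 * cos (y/2)) powr (-\<alpha>) \<le> (2 * sin (y/2)) powr (-\<alpha>)"
      using sc assms by (intro powr_mono2') auto
    then show ?thesis
      using s by (simp add: folded_circle_kernel_def)
  qed (simp add: folded_circle_kernel_def)
  assume y: "pi/8 \<le> y" "y \<le> 3 * pi/8"
  have "0 < y" "2 * y < pi"
    using y pi_gt_zero by linarith+
  then have "0 < sin (2 * y)" "0 < sin y" "0 < sin (y/2)"
    by (auto intro!: sin_gt_zero)
  moreover have "sin (y/2) < cos (y/2)"
    using sin_monotone_2pi[of "y/2" "pi/2 - y/2"] y pi_gt_zero by (simp add: sin_cos_eq)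
  then have "(2 * cos (y/2)) powr (-\<alpha>) < (2 * sin (y/2)) powr (-\<alpha>)"
    using \<open>0 < sin (y/2)\<close> assms by (intro powr_less_mono2_neg) auto
  ultimately show "0 < folded_circle_kernel \<alpha> y"
    by (simp add: folded_circle_kernel_def)
qed

lemma continuous_on_folded_circle_kernel:
  assumes "0 < a" "b < pi"
  shows "continuous_on {a..b} (folded_circle_kernel \<alpha>)"
proof -
  have "\<forall>y\<in>{a..b}. sin (y/2) \<noteq> 0 \<and> cos (y/2) \<noteq> 0"
  proof
    fix y assume "y \<in> {a..b}"
    then have "0 < y/2" "y/2 < pi/2"
      using assms by auto
    then show "sin (y/2) \<noteq> 0 \<and> cos (y/2) \<noteq> 0"
      using sin_gt_zero[of "y/2"] cos_gt_zero[of "y/2"] by auto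
  qed
  then show ?thesis
    unfolding folded_circle_kernel_def[abs_def] by (intro continuous_intros) auto
qed

lemma integral_circle_kernel_sin2_pos:
  assumes "0 < \<alpha>" "\<alpha> < 2"
  shows "0 < integral {0..2 * pi} (\<lambda>y. circle_kernel \<alpha> y * sin (2 * y))"
proof -
  define f where "f y = circle_kernel \<alpha> y * sin (2 * y)" for y
  have f_int: "f integrable_on {0..2 * pi}"
    unfolding f_def using circle_kernel_sin2_set_integrable[OF assms]
    by (rule set_borel_integral_eq_integral)
  have f_reflect: "f (2 * pi - y) = f y" for y
    by (simp add: f_def circle_kernel_reflect right_diff_distrib sin_diff)
  have f_int': "(\<lambda>y. 2 * f y) integrable_on {0..pi}"
    using integrable_subinterval_real[OF f_int, of 0 pi] by simp
  have fold_int: "(\<lambda>y. 2 * f y + 2 * f (0 + pi - y)) integrable_on {0..pi/2}"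
    using integrable_add[OF f_int' integrable_reflect_interval[OF f_int']]
    by (rule integrable_subinterval_real) auto
  have fold_eq: "2 * f y + 2 * f (0 + pi - y) = 2 * folded_circle_kernel \<alpha> y" if "y \<in> {0..pi/2}" for y
  proof -
    have "f y + f (pi - y) = folded_circle_kernel \<alpha> y"
      unfolding f_def using that by (intro circle_kernel_sin2_fold) auto
    then show ?thesis by simp
  qed
  have "integral {0..2 * pi} f = integral {0..pi} (\<lambda>y. 2 * f y)"
    using integral_fold_midpoint[OF f_int] by (simp add: f_reflect)
  also have "\<dots> = integral {0..pi/2} (\<lambda>y. 2 * f y + 2 * f (0 + pi - y))"
    using integral_fold_midpoint[OF f_int'] by simp
  also have "\<dots> = integral {0..pi/2} (\<lambda>y. 2 * folded_circle_kernel \<alpha> y)"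
    using fold_eq by (rule integral_cong)
  also have "0 < \<dots>"
  proof (rule integral_pos_if_pos_on_subinterval[where c = "pi/8" and d = "3 * pi/8"])
    show "(\<lambda>y. 2 * folded_circle_kernel \<alpha> y) integrable_on {0..pi/2}"
      using fold_int fold_eq by (rule integrable_eq)
  qed (use folded_circle_kernel_nonneg[OF assms(1)] continuous_on_folded_circle_kernel[of "pi/8" "3 * pi/8" \<alpha>]
      in \<open>auto intro!: continuous_intros\<close>)
  finally show ?thesis
    unfolding f_def .
qed


lemma c_alpha_nonzero:
  assumes "0 < \<alpha>" "\<alpha> < 2" "\<theta>1 \<noteq> \<theta>2"
  shows "c_alpha \<alpha> \<theta>1 \<theta>2 \<noteq> 0"
proof -
  have "0 < Gamma (\<alpha> / 2)" "0 < Gamma ((2 - \<alpha>) / 2)"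
    using assms by (simp_all add: Gamma_real_pos)
  then have "Gamma (\<alpha> / 2) \<noteq> 0" "Gamma ((2 - \<alpha>) / 2) \<noteq> 0"
    by simp_all
  then show ?thesis
    using assms by (simp add: c_alpha_def)
qed

theorem theorem1:
  fixes \<alpha> \<theta>1 \<theta>2 R1 R2 :: real
  assumes "0 < \<alpha>" and "\<alpha> < 2" and "\<theta>1 \<noteq> \<theta>2"
    and "0 < R1" and "0 < R2" and "R1 \<noteq> R2"
  shows "\<not> (\<exists>\<Omega>::real. \<forall>x\<in>{0..2*pi}.
           inner (patch_velocity \<alpha> \<theta>1 \<theta>2 (ellipse R1 R2) (ellipse_deriv R1 R2) x)
                 (perp (ellipse_deriv R1 R2 x))
         = inner (\<i> * complex_of_real \<Omega> * ellipse R1 R2 x) (perp (ellipse_deriv R1 R2 x)))"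
proof
  assume "\<exists>\<Omega>::real. \<forall>x\<in>{0..2*pi}.
           inner (patch_velocity \<alpha> \<theta>1 \<theta>2 (ellipse R1 R2) (ellipse_deriv R1 R2) x)
                 (perp (ellipse_deriv R1 R2 x))
         = inner (\<i> * complex_of_real \<Omega> * ellipse R1 R2 x) (perp (ellipse_deriv R1 R2 x))"
  then obtain \<Omega> where rotating: "\<And>x. x \<in> {0..2*pi} \<Longrightarrow>
      c_alpha \<alpha> \<theta>1 \<theta>2 * R1 * R2 * integral {0..2 * pi} (normal_kernel \<alpha> R1 R2 x)
    = \<Omega> * (R2^2 - R1^2) * sin x * cos x"
    using inner_patch_velocity_normal[OF assms(1,2,4,5)] inner_rotation_normal by metis
  define c where "c = c_alpha \<alpha> \<theta>1 \<theta>2 * R1 * R2"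
  define K where "K = \<Omega> * (R2^2 - R1^2) / (2 * c)"
  have "c \<noteq> 0"
    using c_alpha_nonzero[OF assms(1-3)] assms(4,5) by (simp add: c_def)
  then have I: "integral {0..2 * pi} (normal_kernel \<alpha> R1 R2 x) = K * sin (2 * x)"
    if "x \<in> {0..2 * pi}" for x
    using rotating[OF that] unfolding sin_double K_def c_def by (simp add: field_simps)
  have "integral {0..pi} (\<lambda>x. sin (4 * x) * integral {0..2 * pi} (normal_kernel \<alpha> R1 R2 x))
      = integral {0..pi} (\<lambda>x. K * (sin (4 * x) * sin (2 * x)))"
    by (rule integral_cong) (simp add: I)
  then have "integral {0..pi} (\<lambda>x. sin (4 * x) * integral {0..2 * pi} (normal_kernel \<alpha> R1 R2 x)) = 0"
    by (simp add: integral_sin4_sin2)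
  moreover have "0 < weight_cos4_coeff \<alpha> R1 R2 * integral {0..2 * pi} (\<lambda>y. circle_kernel \<alpha> y * sin (2 * y))"
    using weight_cos4_coeff_pos integral_circle_kernel_sin2_pos assms by simp
  ultimately show False
    using integral_sin4_normal_kernel[OF assms(1,2,4,5)] by linarith
qed

end
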